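(* Let $k$ be a field, $S=k[x_1,\dots,x_n]$, $\mathfrak m=(x_1,\dots,x_n)$, $I=(f_1,\dots,f_r)$ a linearly presented $\mathfrak m$-primary ideal, $B=k[T_1,\dots,T_r]$, $J\subseteq B[x_1,\dots,x_n]$ the defining ideal of $\mathrm{Sym}(I)$ with minimal generators $L_1,\dots,L_N$, and $\Theta$ the Jacobian dual ($N\times n$ matrix of linear forms in the $T$'s with $\Theta(x_1,\dots,x_n)^T=(L_1,\dots,L_N)^T$). Let $N'$ be the $(n-1)\times n$ submatrix of $\Theta$ consisting of the rows corresponding to $L_{i_1},\dots,L_{i_{n-1}}$, and for $1\le i\le n$ let $\Delta_i=(-1)^i\det N'^{(i)}$, where $N'^{(i)}$ is $N'$ with its $i$-th column deleted. If $\Delta_i\ne0$ for some $i$, then (1) $\Delta_iJ\subseteq(L_{i_1},\dots,L_{i_{n-1}})+I_n(\Theta)B[x_1,\dots,x_n]$; (2) in the ring $B[x_1,\dots,x_n]$ localized by inverting $\Delta_i$, the ideal generated by $L_{i_1},\dots,L_{i_{n-1}}$ equals the ideal generated by the $2\times 2$ minors of $\begin{bmatrix}x_1&\cdots&x_n\\ \Delta_1&\cdots&\Delta_n\end{bmatrix}$.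
   Context: "Linearly presented" means $I$ is generated by forms of a common degree whose syzygy module is generated by linear syzygies $\sum_i a_i(\mathbf x)f_i=0$; $J$ is generated by the bilinear forms $\sum_i a_i(\mathbf x)T_i$ attached to these syzygies, and $L_1,\dots,L_N$ are minimal generators of $J$ (corresponding to minimal generators of the syzygy module). $I_n(\Theta)\subseteq B$ is the ideal of $n\times n$ minors of $\Theta$. *)

theory Defs
  imports "HOL-Library.Poly_Mapping" "Jordan_Normal_Form.Determinant"
begin

text \<open>Variables: X i is x_(i+1) (i < n), T j is T_(j+1) (j < r); indices are 0-based.\<close>
datatype var = X nat | T nat

type_synonym 'k mpoly = "(var \<Rightarrow>\<^sub>0 nat) \<Rightarrow>\<^sub>0 'k"

definition Var :: "var \<Rightarrow> 'k::comm_ring_1 mpoly" where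
  "Var v = Poly_Mapping.single (Poly_Mapping.single v 1) 1"

definition xv :: "nat \<Rightarrow> 'k::comm_ring_1 mpoly" where "xv i = Var (X i)"

definition mdeg :: "(var \<Rightarrow>\<^sub>0 nat) \<Rightarrow> nat" where
  "mdeg m = (\<Sum>v\<in>Poly_Mapping.keys m. Poly_Mapping.lookup m v)"

text \<open>homogeneous of degree d (the zero polynomial counts as a form of every degree)\<close>
definition homog :: "nat \<Rightarrow> 'k::comm_ring_1 mpoly \<Rightarrow> bool" where
  "homog d p \<longleftrightarrow> (\<forall>m\<in>Poly_Mapping.keys p. mdeg m = d)"

definition poly_ring :: "var set \<Rightarrow> 'k::comm_ring_1 mpoly set" where
  "poly_ring V = {p. \<forall>m\<in>Poly_Mapping.keys p. Poly_Mapping.keys m \<subseteq> V}"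

definition S_ring :: "nat \<Rightarrow> 'k::comm_ring_1 mpoly set" where
  "S_ring n = poly_ring {X i | i. i < n}"

definition B_ring :: "nat \<Rightarrow> 'k::comm_ring_1 mpoly set" where
  "B_ring r = poly_ring {T j | j. j < r}"

definition BX_ring :: "nat \<Rightarrow> nat \<Rightarrow> 'k::comm_ring_1 mpoly set" where
  "BX_ring n r = poly_ring ({X i | i. i < n} \<union> {T j | j. j < r})"

definition ideal_in :: "'a::comm_ring_1 set \<Rightarrow> 'a set \<Rightarrow> 'a set" where
  "ideal_in A G = {p. \<exists>F c. finite F \<and> F \<subseteq> G \<and> (\<forall>g\<in>F. c g \<in> A) \<and> p = (\<Sum>g\<in>F. c g * g)}"

text \<open>submodule of A^r (vectors as functions nat => A, zero beyond r) generated by V\<close>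
definition submod_in :: "'a::comm_ring_1 set \<Rightarrow> (nat \<Rightarrow> 'a) set \<Rightarrow> (nat \<Rightarrow> 'a) set" where
  "submod_in A V = {v. \<exists>F c. finite F \<and> F \<subseteq> V \<and> (\<forall>g\<in>F. c g \<in> A) \<and> v = (\<lambda>j. \<Sum>g\<in>F. c g * g j)}"

definition radical_in :: "'a::comm_ring_1 set \<Rightarrow> 'a set \<Rightarrow> 'a set" where
  "radical_in A I = {a \<in> A. \<exists>k. a ^ k \<in> I}"

definition primary_in :: "'a::comm_ring_1 set \<Rightarrow> 'a set \<Rightarrow> bool" where
  "primary_in A I \<longleftrightarrow> I \<noteq> A \<and>
     (\<forall>a\<in>A. \<forall>b\<in>A. a * b \<in> I \<longrightarrow> a \<in> I \<or> (\<exists>k. b ^ k \<in> I))"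

definition max_ideal :: "nat \<Rightarrow> 'k::comm_ring_1 mpoly set" where
  "max_ideal n = ideal_in (S_ring n) {xv i | i. i < n}"

definition m_primary :: "nat \<Rightarrow> 'k::comm_ring_1 mpoly set \<Rightarrow> bool" where
  "m_primary n I \<longleftrightarrow> primary_in (S_ring n) I \<and> radical_in (S_ring n) I = max_ideal n"

definition syz :: "nat \<Rightarrow> nat \<Rightarrow> (nat \<Rightarrow> 'k::comm_ring_1 mpoly) \<Rightarrow> (nat \<Rightarrow> 'k mpoly) set" where
  "syz n r f = {a. (\<forall>j. a j \<in> S_ring n) \<and> (\<forall>j\<ge>r. a j = 0) \<and> (\<Sum>j<r. a j * f j) = 0}"

definition linear_vec :: "(nat \<Rightarrow> 'k::comm_ring_1 mpoly) \<Rightarrow> bool" where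
  "linear_vec a \<longleftrightarrow> (\<forall>j. homog 1 (a j))"

definition linearly_presented :: "nat \<Rightarrow> nat \<Rightarrow> (nat \<Rightarrow> 'k::comm_ring_1 mpoly) \<Rightarrow> bool" where
  "linearly_presented n r f \<longleftrightarrow>
     (\<exists>d. \<forall>j<r. f j \<in> S_ring n \<and> homog d (f j)) \<and>
     syz n r f = submod_in (S_ring n) {a \<in> syz n r f. linear_vec a}"

definition minimal_generators :: "'a::comm_ring_1 set \<Rightarrow> (nat \<Rightarrow> 'a) set \<Rightarrow> nat \<Rightarrow> (nat \<Rightarrow> nat \<Rightarrow> 'a) \<Rightarrow> bool" where
  "minimal_generators A M N a \<longleftrightarrow>
     M = submod_in A {a l | l. l < N} \<and>
     (\<forall>l<N. a l \<notin> submod_in A {a l' | l'. l' < N \<and> l' \<noteq> l})"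

definition sym_form :: "nat \<Rightarrow> (nat \<Rightarrow> 'k::comm_ring_1 mpoly) \<Rightarrow> 'k mpoly" where
  "sym_form r a = (\<Sum>j<r. a j * Var (T j))"

definition max_minors :: "nat \<Rightarrow> 'a::comm_ring_1 mat \<Rightarrow> 'a set" where
  "max_minors n M = {det (mat n n (\<lambda>(a,b). M $$ (\<rho> a, b))) | \<rho>.
       strict_mono_on {..<n} \<rho> \<and> (\<forall>a<n. \<rho> a < dim_row M)}"

definition del_col :: "'a mat \<Rightarrow> nat \<Rightarrow> 'a mat" where
  "del_col M i = mat (dim_row M) (dim_col M - 1) (\<lambda>(a,b). M $$ (a, if b < i then b else Suc b))"

text \<open>contraction to the ring A of the extension of P to A localized at d\<close>
definition sat_in :: "'a::comm_ring_1 set \<Rightarrow> 'a \<Rightarrow> 'a set \<Rightarrow> 'a set" where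
  "sat_in A d P = {g \<in> A. \<exists>m. d ^ m * g \<in> P}"

definition sub_rows :: "'a mat \<Rightarrow> (nat \<Rightarrow> nat) \<Rightarrow> nat \<Rightarrow> 'a mat" where
  "sub_rows M idx m = mat m (dim_col M) (\<lambda>(t,c). M $$ (idx t, c))"

text \<open>Delta k (0-based k, i.e. the paper's Delta_(k+1)) = (-1)^(k+1) det N'^(k+1)\<close>
definition Delta :: "'a::comm_ring_1 mat \<Rightarrow> (nat \<Rightarrow> nat) \<Rightarrow> nat \<Rightarrow> nat \<Rightarrow> 'a" where
  "Delta M idx n k = (-1) ^ (k + 1) * det (del_col (sub_rows M idx (n - 1)) k)"

end

theory Submission
  imports Defs
begin

text \<open>Let N' be the chosen (n-1) x n submatrix of \<Theta> and \<Delta> its vector of signed maximal minors.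
  Inserting a row u into N' and expanding along it gives a determinant \<plusminus>\<Sum> u_j \<Delta>_j: for a row of N'
  this vanishes (N' \<Delta> = 0), and for any row of \<Theta>, inserted at its sorted position, it is a
  maximal minor of \<Theta>. Cramer's rule for the same matrix gives x_k (u \<cdot> \<Delta>) \<equiv> \<Delta>_k (u \<cdot> x) modulo
  L' = (L_i1, ..., L_i(n-1)). With u a unit vector this puts the 2 x 2 minors of [x; \<Delta>] into L';
  conversely \<Delta>_i L_t = \<Sum>_c \<theta>_tc (x_c \<Delta>_i - x_i \<Delta>_c) because N' \<Delta> = 0, so both ideals agree once
  \<Delta>_i is inverted. Finally, for u the row of \<Theta> belonging to L we get \<Delta>_i L \<equiv> x_i (u \<cdot> \<Delta>)
  modulo L', and u \<cdot> \<Delta> lies in I_n(\<Theta>).\<close>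

locale comm_subring =
  fixes A :: "'a::comm_ring_1 set"
  assumes zero_mem [simp, intro]: "0 \<in> A"
    and one_mem [simp, intro]: "1 \<in> A"
    and add_mem [intro]: "x \<in> A \<Longrightarrow> y \<in> A \<Longrightarrow> x + y \<in> A"
    and uminus_mem [intro]: "x \<in> A \<Longrightarrow> - x \<in> A"
    and mult_mem [intro]: "x \<in> A \<Longrightarrow> y \<in> A \<Longrightarrow> x * y \<in> A"
begin

lemma sum_mem: "(\<And>x. x \<in> S \<Longrightarrow> f x \<in> A) \<Longrightarrow> sum f S \<in> A"
  by (induction S rule: infinite_finite_induct) auto

lemma prod_mem: "(\<And>x. x \<in> S \<Longrightarrow> f x \<in> A) \<Longrightarrow> prod f S \<in> A"
  by (induction S rule: infinite_finite_induct) auto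

lemma power_mem: "x \<in> A \<Longrightarrow> x ^ k \<in> A"
  by (induction k) auto

lemma minus_one_power_mem [simp, intro]: "(-1) ^ k \<in> A"
  by (intro power_mem uminus_mem one_mem)

lemma det_mem:
  assumes "M \<in> carrier_mat m m" "\<And>i j. i < m \<Longrightarrow> j < m \<Longrightarrow> M $$ (i, j) \<in> A"
  shows "det M \<in> A"
proof -
  have "signof p \<in> A" for p :: "nat \<Rightarrow> nat"
    by (auto simp: sign_def)
  then show ?thesis
    unfolding det_def'[OF assms(1)] by (intro sum_mem prod_mem mult_mem) (auto intro!: assms(2))
qed

lemma cofactor_mem:
  assumes "M \<in> carrier_mat m m" "\<And>i j. i < m \<Longrightarrow> j < m \<Longrightarrow> M $$ (i, j) \<in> A"
  shows "cofactor M t k \<in> A"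
  unfolding cofactor_def
  using assms by (intro mult_mem minus_one_power_mem det_mem[of _ "m - 1"])
    (auto simp: mat_delete_def)

lemma ideal_in_zero [simp, intro]: "0 \<in> ideal_in A G"
  unfolding ideal_in_def by (rule CollectI, rule exI[of _ "{}"]) auto

lemma ideal_in_generator: "g \<in> G \<Longrightarrow> g \<in> ideal_in A G"
  unfolding ideal_in_def by (rule CollectI, rule exI[of _ "{g}"], rule exI[of _ "\<lambda>_. 1"]) auto

lemma ideal_in_add:
  assumes "p \<in> ideal_in A G" "q \<in> ideal_in A G"
  shows "p + q \<in> ideal_in A G"
proof -
  obtain F c where F: "finite F" "F \<subseteq> G" "\<forall>g\<in>F. c g \<in> A" "p = (\<Sum>g\<in>F. c g * g)"
    using assms(1) unfolding ideal_in_def by blast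
  obtain F' c' where F': "finite F'" "F' \<subseteq> G" "\<forall>g\<in>F'. c' g \<in> A" "q = (\<Sum>g\<in>F'. c' g * g)"
    using assms(2) unfolding ideal_in_def by blast
  define d where "d g = (if g \<in> F then c g else 0) + (if g \<in> F' then c' g else 0)" for g
  have "p = (\<Sum>g\<in>F \<union> F'. (if g \<in> F then c g else 0) * g)"
    unfolding F(4) by (rule sum.mono_neutral_cong_left) (use F F' in auto)
  moreover have "q = (\<Sum>g\<in>F \<union> F'. (if g \<in> F' then c' g else 0) * g)"
    unfolding F'(4) by (rule sum.mono_neutral_cong_left) (use F F' in auto)
  ultimately have "p + q = (\<Sum>g\<in>F \<union> F'. d g * g)"
    by (simp add: d_def distrib_right sum.distrib)
  moreover have "\<forall>g\<in>F \<union> F'. d g \<in> A"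
    using F(3) F'(3) by (auto simp: d_def)
  ultimately show ?thesis
    unfolding ideal_in_def using F F' by (intro CollectI exI[of _ "F \<union> F'"] exI[of _ d]) auto
qed

lemma ideal_in_mult:
  assumes "x \<in> A" "p \<in> ideal_in A G"
  shows "x * p \<in> ideal_in A G"
proof -
  obtain F c where F: "finite F" "F \<subseteq> G" "\<forall>g\<in>F. c g \<in> A" "p = (\<Sum>g\<in>F. c g * g)"
    using assms(2) unfolding ideal_in_def by blast
  have "x * p = (\<Sum>g\<in>F. (x * c g) * g)"
    unfolding F(4) by (simp add: sum_distrib_left mult.assoc)
  then show ?thesis
    unfolding ideal_in_def using F assms(1) by (intro CollectI exI[of _ F] exI[of _ "\<lambda>g. x * c g"]) auto
qed

lemma ideal_in_uminus: "p \<in> ideal_in A G \<Longrightarrow> - p \<in> ideal_in A G"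
  using ideal_in_mult[of "-1"] by auto

lemma ideal_in_diff: "p \<in> ideal_in A G \<Longrightarrow> q \<in> ideal_in A G \<Longrightarrow> p - q \<in> ideal_in A G"
  using ideal_in_add[OF _ ideal_in_uminus] by (simp only: diff_conv_add_uminus)

lemma ideal_in_sum:
  "(\<And>s. s \<in> S \<Longrightarrow> f s \<in> ideal_in A G) \<Longrightarrow> sum f S \<in> ideal_in A G"
  by (induction S rule: infinite_finite_induct) (auto intro: ideal_in_add)

lemma ideal_in_mono: "G \<subseteq> H \<Longrightarrow> ideal_in A G \<subseteq> ideal_in A H"
  unfolding ideal_in_def by blast

lemma ideal_in_subset:
  assumes "G \<subseteq> ideal_in A H"
  shows "ideal_in A G \<subseteq> ideal_in A H"
proof
  fix p assume "p \<in> ideal_in A G"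
  then obtain F c where F: "F \<subseteq> G" "\<forall>g\<in>F. c g \<in> A" "p = (\<Sum>g\<in>F. c g * g)"
    unfolding ideal_in_def by blast
  show "p \<in> ideal_in A H"
    unfolding F(3) using F(1,2) assms by (intro ideal_in_sum ideal_in_mult) auto
qed

lemma mult_ideal_in_subset:
  assumes "d \<in> A" "\<And>g. g \<in> G \<Longrightarrow> d * g \<in> ideal_in A H" "p \<in> ideal_in A G"
  shows "d * p \<in> ideal_in A H"
proof -
  obtain F c where F: "F \<subseteq> G" "\<forall>g\<in>F. c g \<in> A" "p = (\<Sum>g\<in>F. c g * g)"
    using assms(3) unfolding ideal_in_def by blast
  have "d * p = (\<Sum>g\<in>F. c g * (d * g))"
    unfolding F(3) by (simp add: sum_distrib_left mult_ac)
  also have "\<dots> \<in> ideal_in A H"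
    using F(1,2) by (intro ideal_in_sum ideal_in_mult[OF _ assms(2)]) auto
  finally show ?thesis .
qed

lemma sat_in_ideal_in_eq:
  assumes "d \<in> A" "H \<subseteq> ideal_in A G" "\<And>g. g \<in> G \<Longrightarrow> d * g \<in> ideal_in A H"
  shows "sat_in A d (ideal_in A G) = sat_in A d (ideal_in A H)"
proof
  show "sat_in A d (ideal_in A G) \<subseteq> sat_in A d (ideal_in A H)"
  proof
    fix p assume "p \<in> sat_in A d (ideal_in A G)"
    then obtain m where p: "p \<in> A" "d ^ m * p \<in> ideal_in A G"
      unfolding sat_in_def by blast
    have "d ^ Suc m * p = d * (d ^ m * p)"
      by (simp add: mult.assoc)
    also have "\<dots> \<in> ideal_in A H"
      using assms(1,3) p(2) by (rule mult_ideal_in_subset)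
    finally show "p \<in> sat_in A d (ideal_in A H)"
      unfolding sat_in_def using p(1) by blast
  qed
  show "sat_in A d (ideal_in A H) \<subseteq> sat_in A d (ideal_in A G)"
    using ideal_in_subset[OF assms(2)] unfolding sat_in_def by blast
qed

end

interpretation poly_ring: comm_subring "poly_ring V"
proof
  fix p q :: "'a::comm_ring_1 mpoly"
  assume p: "p \<in> poly_ring V" and q: "q \<in> poly_ring V"
  show "p + q \<in> poly_ring V"
    using p q keys_add[of p q] unfolding poly_ring_def by blast
  show "- p \<in> poly_ring V"
    using p unfolding poly_ring_def by simp
  show "p * q \<in> poly_ring V"
    unfolding poly_ring_def
  proof (intro CollectI ballI)
    fix m assume "m \<in> Poly_Mapping.keys (p * q)"
    then obtain u v where "m = u + v" "u \<in> Poly_Mapping.keys p" "v \<in> Poly_Mapping.keys q"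
      using keys_mult by blast
    then show "Poly_Mapping.keys m \<subseteq> V"
      using p q keys_add[of u v] unfolding poly_ring_def by blast
  qed
qed (auto simp: poly_ring_def)

lemma Var_mem_poly_ring: "v \<in> V \<Longrightarrow> Var v \<in> poly_ring V"
  unfolding poly_ring_def Var_def by simp

lemma poly_ring_mono: "V \<subseteq> W \<Longrightarrow> poly_ring V \<subseteq> poly_ring W"
  unfolding poly_ring_def by auto

definition row_form :: "'a::comm_ring_1 mat \<Rightarrow> nat \<Rightarrow> (nat \<Rightarrow> 'a) \<Rightarrow> 'a" where
  "row_form M l x = (\<Sum>c<dim_col M. M $$ (l, c) * x c)"

definition insert_row :: "'a mat \<Rightarrow> (nat \<Rightarrow> nat) \<Rightarrow> nat \<Rightarrow> nat \<Rightarrow> (nat \<Rightarrow> 'a) \<Rightarrow> 'a mat" where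
  "insert_row M idx n p u = mat n n (\<lambda>(a, b).
     if a < p then M $$ (idx a, b) else if a = p then u b else M $$ (idx (a - 1), b))"

lemma insert_row_carrier [simp]: "insert_row M idx n p u \<in> carrier_mat n n"
  unfolding insert_row_def by simp

lemma cofactor_insert_row:
  assumes "dim_col M = n" "p < n" "k < n"
  shows "cofactor (insert_row M idx n p u) p k = (-1) ^ (p + 1) * Delta M idx n k"
proof -
  have "mat_delete (insert_row M idx n p u) p k = del_col (sub_rows M idx (n - 1)) k"
    using assms unfolding mat_delete_def del_col_def sub_rows_def insert_row_def
    by (intro eq_matI) auto
  moreover have "(-1::'a) ^ (p + k) = (-1) ^ (p + 1) * (-1) ^ (k + 1)"
    by (simp add: power_add)
  ultimately show ?thesis
    unfolding cofactor_def Delta_def by (simp add: mult_ac)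
qed

lemma det_insert_row:
  assumes "dim_col M = n" "p < n"
  shows "det (insert_row M idx n p u) = (-1) ^ (p + 1) * (\<Sum>j<n. u j * Delta M idx n j)"
proof -
  let ?B = "insert_row M idx n p u"
  have "det ?B = (\<Sum>j<n. ?B $$ (p, j) * cofactor ?B p j)"
    using assms(2) by (rule laplace_expansion_row[OF insert_row_carrier])
  also have "\<dots> = (\<Sum>j<n. (-1) ^ (p + 1) * (u j * Delta M idx n j))"
  proof (rule sum.cong[OF refl])
    fix j assume "j \<in> {..<n}"
    moreover have "?B $$ (p, j) = u j" if "j < n"
      using assms(2) that by (simp add: insert_row_def)
    ultimately show "?B $$ (p, j) * cofactor ?B p j = (-1) ^ (p + 1) * (u j * Delta M idx n j)"
      using assms by (simp add: cofactor_insert_row mult_ac)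
  qed
  finally show ?thesis
    by (simp add: sum_distrib_left)
qed

text \<open>Inserting one of the rows idx t again gives a matrix with two equal rows.\<close>

lemma Delta_orthogonal_rows:
  assumes "dim_col M = n" "t < n - 1"
  shows "(\<Sum>c<n. M $$ (idx t, c) * Delta M idx n c) = 0"
proof -
  let ?B = "insert_row M idx n 0 (\<lambda>c. M $$ (idx t, c))"
  have "det ?B = 0"
    using assms(2) by (intro det_identical_rows[OF insert_row_carrier, of 0 "t + 1"] eq_vecI)
      (auto simp: insert_row_def)
  then show ?thesis
    using det_insert_row[OF assms(1), of 0] assms(2) by simp
qed

lemma det_mult_component_eq_adj:
  assumes "B \<in> carrier_mat n n" "k < n"
  shows "det B * x k = (\<Sum>t<n. cofactor B t k * (\<Sum>c<n. B $$ (t, c) * x c))"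
proof -
  have adj: "(\<Sum>t<n. B $$ (t, c) * cofactor B t k) = (if k = c then det B else 0)" if "c < n" for c
proof -
    have "(adj_mat B * B) $$ (k, c) = (\<Sum>t<n. B $$ (t, c) * cofactor B t k)"
      unfolding times_mat_def scalar_prod_def adj_mat_def using assms that by (auto intro: sum.cong)
    then show ?thesis
      using adj_mat(3)[OF assms(1)] assms(2) that by auto
  qed
  have "(\<Sum>t<n. cofactor B t k * (\<Sum>c<n. B $$ (t, c) * x c))
      = (\<Sum>t<n. \<Sum>c<n. x c * (B $$ (t, c) * cofactor B t k))"
    by (simp add: sum_distrib_left mult_ac)
  also have "\<dots> = (\<Sum>c<n. x c * (\<Sum>t<n. B $$ (t, c) * cofactor B t k))"
    by (subst sum.swap) (simp add: sum_distrib_left)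
  also have "\<dots> = (\<Sum>c<n. if k = c then det B * x c else 0)"
    using adj by (intro sum.cong) (auto simp: mult_ac)
  also have "\<dots> = det B * x k"
    using assms(2) by simp
  finally show ?thesis ..
qed

lemma strict_mono_on_insert:
  fixes idx :: "nat \<Rightarrow> nat"
  assumes mono: "strict_mono_on {..<m} idx" and l: "l \<notin> idx ` {..<m}"
  obtains p where "p \<le> m"
    "strict_mono_on {..<Suc m} (\<lambda>a. if a < p then idx a else if a = p then l else idx (a - 1))"
proof
  define p where "p = (LEAST q. q = m \<or> l < idx q)"
  show "p \<le> m"
    unfolding p_def by (rule Least_le) simp
  have below: "idx t < l" if "t < p" for t
proof -
    have "t < m" "\<not> l < idx t"
      using not_less_Least[of t "\<lambda>q. q = m \<or> l < idx q"] that \<open>p \<le> m\<close> unfolding p_def by auto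
    with l show ?thesis
      by (metis lessThan_iff image_eqI linorder_neqE_nat)
  qed
  have above: "l < idx t" if "p \<le> t" "t < m" for t
proof -
    have "l < idx p"
      using LeastI[of "\<lambda>q. q = m \<or> l < idx q" m] that unfolding p_def by auto
    also have "idx p \<le> idx t"
      using that by (intro strict_mono_on_leD[OF mono]) auto
    finally show ?thesis .
  qed
  have increasing: "idx a < idx b" if "a < b" "b < m" for a b
    using that by (intro strict_mono_onD[OF mono]) auto
  show "strict_mono_on {..<Suc m} (\<lambda>a. if a < p then idx a else if a = p then l else idx (a - 1))"
  proof (rule strict_mono_onI)
    fix a b assume "a \<in> {..<Suc m}" "b \<in> {..<Suc m}" "a < b"
    then have "b \<le> m" "a < b" by auto
    consider "b < p" | "b = p" | "p < b" by linarith
    then show "(if a < p then idx a else if a = p then l else idx (a - 1))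
        < (if b < p then idx b else if b = p then l else idx (b - 1))"
    proof cases
      case 1
      then show ?thesis using \<open>a < b\<close> \<open>p \<le> m\<close> by (simp add: increasing)
    next
      case 2
      then show ?thesis using \<open>a < b\<close> by (simp add: below)
    next
      case 3
      then have "l < idx (b - 1)"
        using \<open>b \<le> m\<close> by (intro above) auto
      moreover have "idx (a - 1) < idx (b - 1)" if "p < a"
        using that \<open>a < b\<close> \<open>b \<le> m\<close> by (intro increasing) auto
      ultimately show ?thesis
        using 3 below[of a] by auto
    qed
  qed
qed

context comm_subring
begin

lemma Delta_mem:
  assumes "dim_col M = n" "\<And>t c. t < n - 1 \<Longrightarrow> c < n \<Longrightarrow> M $$ (idx t, c) \<in> A"
  shows "Delta M idx n k \<in> A"
  unfolding Delta_def using assms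
  by (intro mult_mem minus_one_power_mem det_mem[of _ "n - 1"])
    (auto simp: del_col_def sub_rows_def)

text \<open>Cramer's rule: modulo the forms of the rows idx t, the vector x is proportional to
  the vector of signed maximal minors of these rows.\<close>

lemma Delta_cramer_mem_ideal_in:
  assumes M: "dim_col M = n" "\<And>t c. t < n - 1 \<Longrightarrow> c < n \<Longrightarrow> M $$ (idx t, c) \<in> A"
    and u: "\<And>c. c < n \<Longrightarrow> u c \<in> A" and "k < n"
  shows "x k * (\<Sum>j<n. u j * Delta M idx n j) - Delta M idx n k * (\<Sum>c<n. u c * x c)
    \<in> ideal_in A {row_form M (idx t) x | t. t < n - 1}"
proof -
  obtain m where n: "n = Suc m"
    using \<open>k < n\<close> by (cases n) auto
  define B where "B = insert_row M idx n 0 u"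
  have B: "B \<in> carrier_mat n n"
    unfolding B_def by simp
  have B_mem: "B $$ (a, c) \<in> A" if "a < n" "c < n" for a c
    using that M(2) u by (cases a) (auto simp: B_def insert_row_def n)
  have B_rows: "(\<Sum>c<n. B $$ (Suc t, c) * x c) = row_form M (idx t) x" if "t < m" for t
    using that M(1) by (auto simp: B_def insert_row_def row_form_def n intro: sum.cong)
  have "- (\<Sum>j<n. u j * Delta M idx n j) * x k = det B * x k"
    using det_insert_row[OF M(1), of 0] n by (simp add: B_def)
  also have "\<dots> = (\<Sum>t<n. cofactor B t k * (\<Sum>c<n. B $$ (t, c) * x c))"
    using B \<open>k < n\<close> by (rule det_mult_component_eq_adj)
  also have "\<dots> = cofactor B 0 k * (\<Sum>c<n. B $$ (0, c) * x c)
      + (\<Sum>t<m. cofactor B (Suc t) k * (\<Sum>c<n. B $$ (Suc t, c) * x c))"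
    unfolding n by (rule sum.lessThan_Suc_shift)
  also have "\<dots> = - Delta M idx n k * (\<Sum>c<n. u c * x c)
      + (\<Sum>t<m. cofactor B (Suc t) k * row_form M (idx t) x)"
    using cofactor_insert_row[OF M(1), of 0 k] \<open>k < n\<close> B_rows
    by (simp add: B_def insert_row_def n)
  finally have "x k * (\<Sum>j<n. u j * Delta M idx n j) - Delta M idx n k * (\<Sum>c<n. u c * x c)
      = - (\<Sum>t<m. cofactor B (Suc t) k * row_form M (idx t) x)"
    by (simp add: algebra_simps)
  also have "\<dots> \<in> ideal_in A {row_form M (idx t) x | t. t < n - 1}"
    using B B_mem n by (intro ideal_in_uminus ideal_in_sum ideal_in_mult cofactor_mem ideal_in_generator) auto
  finally show ?thesis .
qed

lemma Delta_minor_mem_ideal_in: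
  assumes M: "dim_col M = n" "\<And>t c. t < n - 1 \<Longrightarrow> c < n \<Longrightarrow> M $$ (idx t, c) \<in> A"
    and "b < n" "k < n"
  shows "x k * Delta M idx n b - x b * Delta M idx n k
    \<in> ideal_in A {row_form M (idx t) x | t. t < n - 1}"
proof -
  let ?u = "\<lambda>c. if c = b then 1 else 0 :: 'a"
  have delta: "?u c * y = (if c = b then y else 0)" for c y
    by simp
  have "(\<Sum>j<n. ?u j * Delta M idx n j) = Delta M idx n b" "(\<Sum>c<n. ?u c * x c) = x b"
    using \<open>b < n\<close> by (simp_all only: delta sum.delta) simp_all
  moreover have "x k * (\<Sum>j<n. ?u j * Delta M idx n j) - Delta M idx n k * (\<Sum>c<n. ?u c * x c)
      \<in> ideal_in A {row_form M (idx t) x | t. t < n - 1}"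
    using M \<open>k < n\<close> by (intro Delta_cramer_mem_ideal_in) auto
  ultimately show ?thesis
    by (simp add: mult.commute)
qed

lemma Delta_mult_row_form_mem_ideal_in:
  assumes M: "dim_col M = n" "\<And>c. c < n \<Longrightarrow> M $$ (idx t, c) \<in> A"
    and "t < n - 1" "k < n"
  shows "Delta M idx n k * row_form M (idx t) x
    \<in> ideal_in A {x b * Delta M idx n c - x c * Delta M idx n b | b c. b < c \<and> c < n}"
    (is "_ \<in> ideal_in A ?minors")
proof -
  have minor: "x c * Delta M idx n k - x k * Delta M idx n c \<in> ideal_in A ?minors" if "c < n" for c
proof -
    consider "c < k" | "c = k" | "k < c" by linarith
    then show ?thesis
    proof cases
      case 1
      then show ?thesis using \<open>k < n\<close> by (intro ideal_in_generator) blast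
    next
      case 3
      then have "- (x k * Delta M idx n c - x c * Delta M idx n k) \<in> ideal_in A ?minors"
        using \<open>c < n\<close> by (intro ideal_in_uminus ideal_in_generator) blast
      then show ?thesis by simp
    qed simp
  qed
  have "Delta M idx n k * row_form M (idx t) x
      = (\<Sum>c<n. M $$ (idx t, c) * (x c * Delta M idx n k - x k * Delta M idx n c))
        + x k * (\<Sum>c<n. M $$ (idx t, c) * Delta M idx n c)"
    by (simp add: row_form_def M(1) algebra_simps sum_distrib_left sum_subtractf)
  also have "\<dots> = (\<Sum>c<n. M $$ (idx t, c) * (x c * Delta M idx n k - x k * Delta M idx n c))"
    using Delta_orthogonal_rows[OF M(1) \<open>t < n - 1\<close>] by simp
  also have "\<dots> \<in> ideal_in A ?minors"
    using M(2) minor by (intro ideal_in_sum ideal_in_mult) auto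
  finally show ?thesis .
qed

lemma Delta_pairing_mem_ideal_in_max_minors:
  assumes M: "dim_col M = n" and idx: "strict_mono_on {..<n - 1} idx" "\<forall>t<n - 1. idx t < dim_row M"
    and "l < dim_row M"
  shows "(\<Sum>j<n. M $$ (l, j) * Delta M idx n j) \<in> ideal_in A (max_minors n M)"
proof (cases "l \<in> idx ` {..<n - 1}")
  case True
  then obtain t where "t < n - 1" "l = idx t"
    by blast
  then show ?thesis
    using Delta_orthogonal_rows[OF M] by simp
next
  case False
  show ?thesis
  proof (cases n)
    case (Suc m)
    obtain p where "p \<le> m"
      and mono: "strict_mono_on {..<Suc m} (\<lambda>a. if a < p then idx a else if a = p then l else idx (a - 1))"
      using strict_mono_on_insert[of m idx l] idx(1) False Suc by auto
    define \<rho> where "\<rho> a = (if a < p then idx a else if a = p then l else idx (a - 1))" for a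
    let ?B = "insert_row M idx n p (\<lambda>j. M $$ (l, j))"
    have "?B = mat n n (\<lambda>(a, b). M $$ (\<rho> a, b))"
      by (intro eq_matI) (auto simp: insert_row_def \<rho>_def)
    moreover have "\<rho> a < dim_row M" if "a < n" for a
      using that idx(2) \<open>l < dim_row M\<close> \<open>p \<le> m\<close> Suc by (auto simp: \<rho>_def)
    ultimately have "det ?B \<in> max_minors n M"
      unfolding max_minors_def using mono Suc by (intro CollectI exI[of _ \<rho>]) (simp add: \<rho>_def[abs_def])
    moreover have "(\<Sum>j<n. M $$ (l, j) * Delta M idx n j) = (-1) ^ (p + 1) * det ?B"
      using det_insert_row[OF M, of p] \<open>p \<le> m\<close> Suc by (simp add: mult.assoc[symmetric])
    ultimately show ?thesis
      by (metis ideal_in_generator ideal_in_mult minus_one_power_mem)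
  qed simp
qed

lemma Delta_mult_ideal_in_subset:
  assumes M: "dim_col M = n" "\<And>l c. l < dim_row M \<Longrightarrow> c < n \<Longrightarrow> M $$ (l, c) \<in> A"
    and idx: "strict_mono_on {..<n - 1} idx" "\<forall>t<n - 1. idx t < dim_row M"
    and "i < n" "x i \<in> A"
    and "p \<in> ideal_in A {row_form M l x | l. l < dim_row M}"
  shows "Delta M idx n i * p \<in> ideal_in A ({row_form M (idx t) x | t. t < n - 1} \<union> max_minors n M)"
    (is "_ \<in> ideal_in A (?L \<union> ?minors)")
proof (rule mult_ideal_in_subset)
  show "Delta M idx n i \<in> A"
    using M(1) by (rule Delta_mem) (use M(2) idx(2) in blast)
  show "p \<in> ideal_in A {row_form M l x | l. l < dim_row M}"
    by fact
  fix g assume "g \<in> {row_form M l x | l. l < dim_row M}"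
  then obtain l where "l < dim_row M" and g: "g = row_form M l x"
    by blast
  let ?s = "\<Sum>j<n. M $$ (l, j) * Delta M idx n j"
  have "x i * ?s \<in> ideal_in A (?L \<union> ?minors)"
    using Delta_pairing_mem_ideal_in_max_minors[OF M(1) idx \<open>l < dim_row M\<close>] ideal_in_mono[of ?minors]
    by (intro ideal_in_mult[OF \<open>x i \<in> A\<close>]) blast
  moreover have "x i * ?s - Delta M idx n i * g \<in> ideal_in A (?L \<union> ?minors)"
    using Delta_cramer_mem_ideal_in[of M n idx "\<lambda>j. M $$ (l, j)" i x] ideal_in_mono[of ?L]
      M idx(2) \<open>l < dim_row M\<close> \<open>i < n\<close>
    by (auto simp: g row_form_def)
  ultimately have "x i * ?s - (x i * ?s - Delta M idx n i * g) \<in> ideal_in A (?L \<union> ?minors)"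
    by (rule ideal_in_diff)
  then show "Delta M idx n i * g \<in> ideal_in A (?L \<union> ?minors)"
    by simp
qed

lemma sat_in_Delta_row_forms_eq:
  assumes M: "dim_col M = n" "\<And>t c. t < n - 1 \<Longrightarrow> c < n \<Longrightarrow> M $$ (idx t, c) \<in> A"
    and "i < n"
  shows "sat_in A (Delta M idx n i) (ideal_in A {row_form M (idx t) x | t. t < n - 1})
    = sat_in A (Delta M idx n i)
        (ideal_in A {x b * Delta M idx n c - x c * Delta M idx n b | b c. b < c \<and> c < n})"
proof (rule sat_in_ideal_in_eq)
  show "Delta M idx n i \<in> A"
    using M by (rule Delta_mem)
  show "{x b * Delta M idx n c - x c * Delta M idx n b | b c. b < c \<and> c < n}
      \<subseteq> ideal_in A {row_form M (idx t) x | t. t < n - 1}"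
  proof
    fix g assume "g \<in> {x b * Delta M idx n c - x c * Delta M idx n b | b c. b < c \<and> c < n}"
    then obtain b c where "b < c" "c < n" "g = x b * Delta M idx n c - x c * Delta M idx n b"
      by blast
    then show "g \<in> ideal_in A {row_form M (idx t) x | t. t < n - 1}"
      using M by (simp only:) (rule Delta_minor_mem_ideal_in; auto)
  qed
  show "Delta M idx n i * g
      \<in> ideal_in A {x b * Delta M idx n c - x c * Delta M idx n b | b c. b < c \<and> c < n}"
    if "g \<in> {row_form M (idx t) x | t. t < n - 1}" for g
    using that M \<open>i < n\<close> Delta_mult_row_form_mem_ideal_in[OF M(1)] by auto
qed

end

theorem corollary2p10:
  fixes n r N i :: nat
    and f :: "nat \<Rightarrow> 'k::field mpoly"
    and a :: "nat \<Rightarrow> nat \<Rightarrow> 'k mpoly"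
    and \<Theta> :: "'k mpoly mat"
    and idx :: "nat \<Rightarrow> nat"
  assumes f_S: "\<forall>j<r. f j \<in> S_ring n"
    and I_primary: "m_primary n (ideal_in (S_ring n) {f j | j. j < r})"
    and lin_pres: "linearly_presented n r f"
    and a_min: "minimal_generators (S_ring n) (syz n r f) N a"
    and a_lin: "\<forall>l<N. linear_vec (a l)"
    and \<Theta>_dim: "dim_row \<Theta> = N" "dim_col \<Theta> = n"
    and \<Theta>_lin: "\<forall>l<N. \<forall>c<n. \<Theta> $$ (l, c) \<in> B_ring r \<and> homog 1 (\<Theta> $$ (l, c))"
    and \<Theta>_jac: "\<forall>l<N. (\<Sum>c<n. \<Theta> $$ (l, c) * xv c) = sym_form r (a l)"
    and idx: "strict_mono_on {..<n - 1} idx" "\<forall>t<n - 1. idx t < N"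
    and i: "i < n" "Delta \<Theta> idx n i \<noteq> 0"
  shows "({Delta \<Theta> idx n i * g | g. g \<in> ideal_in (BX_ring n r) {sym_form r (a l) | l. l < N}}
           \<subseteq> ideal_in (BX_ring n r)
                ({sym_form r (a (idx t)) | t. t < n - 1} \<union> max_minors n \<Theta>))
         \<and> (sat_in (BX_ring n r) (Delta \<Theta> idx n i)
           (ideal_in (BX_ring n r) {sym_form r (a (idx t)) | t. t < n - 1})
         = sat_in (BX_ring n r) (Delta \<Theta> idx n i)
           (ideal_in (BX_ring n r)
              {xv b * Delta \<Theta> idx n c - xv c * Delta \<Theta> idx n b | b c. b < c \<and> c < n}))"
proof -
  define V where "V = {X i | i. i < n} \<union> {T j | j. j < r}"
  have ring: "BX_ring n r = poly_ring V"
    unfolding BX_ring_def V_def ..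
  have entries: "\<Theta> $$ (l, c) \<in> poly_ring V" if "l < dim_row \<Theta>" "c < n" for l c
    using \<Theta>_lin \<Theta>_dim that poly_ring_mono[of "{T j | j. j < r}" V]
    unfolding B_ring_def V_def by blast
  have x_mem: "xv i \<in> poly_ring V"
    unfolding xv_def V_def using i(1) by (intro Var_mem_poly_ring) blast
  have forms: "sym_form r (a l) = row_form \<Theta> l xv" if "l < N" for l
    using \<Theta>_jac \<Theta>_dim that by (simp add: row_form_def)
  have all_forms: "{sym_form r (a l) | l. l < N} = {row_form \<Theta> l xv | l. l < dim_row \<Theta>}"
    using forms \<Theta>_dim by force
  have chosen_forms: "{sym_form r (a (idx t)) | t. t < n - 1} = {row_form \<Theta> (idx t) xv | t. t < n - 1}"
    using forms idx(2) by force
  have chosen_entries: "\<Theta> $$ (idx t, c) \<in> poly_ring V" if "t < n - 1" "c < n" for t c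
    using that idx(2) \<Theta>_dim(1) by (intro entries) auto
  show ?thesis
    unfolding ring all_forms chosen_forms
    using poly_ring.Delta_mult_ideal_in_subset[where x = xv,
        OF \<Theta>_dim(2) entries idx(1) idx(2)[folded \<Theta>_dim(1)] i(1) x_mem]
      poly_ring.sat_in_Delta_row_forms_eq[where x = xv and idx = idx, OF \<Theta>_dim(2) chosen_entries i(1)]
    by blast
qed

end
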